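(* Let $G$ be a $(3,4)$-biregular $X,Y$-bigraph (multiple edges allowed) in which every vertex of $X$ has degree 3 and every vertex of $Y$ has degree 4, and let $P$ be a proper path-factor of $G$. Let $Q=G-E(P)$. Let $G_P$ be the graph whose vertex set is $\{x\in X : d_P(x)=2\}$, in which $x_i$ and $x_j$ are adjacent whenever (a) $x_i$ and $x_j$ are vertices of degree 2 in one component of $P$ that is a path of length 6, or (b) $x_i$ and $x_j$ are vertices of degree 2 at distance 4 in one component of $P$ that is a path of length 8, or (c) $x_i$ and $x_j$ are the vertices of degree 1 of one component of $Q$. Then $G_P$ is bipartite.
   Context: Graphs may have multiple edges. An $X,Y$-bigraph is a bipartite graph with partite sets $X$ and $Y$. A $(3,4)$-biregular bigraph is a bipartite graph in which every vertex of one part has degree 3 and every vertex of the other part has degree 4. A proper path-factor of a $(3,4)$-biregular $X,Y$-bigraph $G$ (with $X$ the degree-3 side) is a spanning subgraph of $G$ each of whose components is a path whose two endpoints lie in $X$ and whose length (number of edges) lies in $\{2,4,6,8\}$. $d_H(v)$ denotes the degree of $v$ in $H$. *)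

theory Defs
  imports Main
begin

text \<open>A multigraph bigraph: vertex parts X, Y; a set of edge identifiers E;
  each edge e has ends e = (x-end, y-end).  Multiple edges are allowed since
  distinct edge identifiers may have the same ends.\<close>

definition inc :: "('e \<Rightarrow> 'v \<times> 'v) \<Rightarrow> 'e \<Rightarrow> 'v \<Rightarrow> bool" where
  "inc ends e v \<longleftrightarrow> v = fst (ends e) \<or> v = snd (ends e)"

definition deg :: "('e \<Rightarrow> 'v \<times> 'v) \<Rightarrow> 'e set \<Rightarrow> 'v \<Rightarrow> nat" where
  "deg ends F v = card {e \<in> F. inc ends e v}"

definition joins :: "('e \<Rightarrow> 'v \<times> 'v) \<Rightarrow> 'e \<Rightarrow> 'v \<Rightarrow> 'v \<Rightarrow> bool" where
  "joins ends e u v \<longleftrightarrow> ends e = (u, v) \<or> ends e = (v, u)"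

definition adj :: "('e \<Rightarrow> 'v \<times> 'v) \<Rightarrow> 'e set \<Rightarrow> 'v \<Rightarrow> 'v \<Rightarrow> bool" where
  "adj ends F u v \<longleftrightarrow> (\<exists>e\<in>F. joins ends e u v)"

definition comp :: "('e \<Rightarrow> 'v \<times> 'v) \<Rightarrow> 'e set \<Rightarrow> 'v \<Rightarrow> 'v set" where
  "comp ends F v = {u. (adj ends F)\<^sup>*\<^sup>* v u}"

definition biregular34 :: "'v set \<Rightarrow> 'v set \<Rightarrow> 'e set \<Rightarrow> ('e \<Rightarrow> 'v \<times> 'v) \<Rightarrow> bool" where
  "biregular34 X Y E ends \<longleftrightarrow> finite X \<and> finite Y \<and> finite E \<and> X \<inter> Y = {} \<and>
     (\<forall>e\<in>E. fst (ends e) \<in> X \<and> snd (ends e) \<in> Y) \<and>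
     (\<forall>x\<in>X. deg ends E x = 3) \<and> (\<forall>y\<in>Y. deg ends E y = 4)"

text \<open>The component with vertex set C of the subgraph with edge set F is the path
  vs!0 -- es!0 -- vs!1 -- ... -- vs!k (length k = length es).\<close>
definition path_rep :: "('e \<Rightarrow> 'v \<times> 'v) \<Rightarrow> 'e set \<Rightarrow> 'v set \<Rightarrow> 'v list \<Rightarrow> 'e list \<Rightarrow> bool" where
  "path_rep ends F C vs es \<longleftrightarrow> length vs = Suc (length es) \<and> distinct vs \<and> distinct es \<and>
     set vs = C \<and> set es = {e \<in> F. \<exists>u\<in>C. inc ends e u} \<and>
     (\<forall>i<length es. joins ends (es ! i) (vs ! i) (vs ! Suc i))"

definition proper_path_factor ::
  "'v set \<Rightarrow> 'v set \<Rightarrow> 'e set \<Rightarrow> ('e \<Rightarrow> 'v \<times> 'v) \<Rightarrow> 'e set \<Rightarrow> bool" where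
  "proper_path_factor X Y E ends F \<longleftrightarrow> F \<subseteq> E \<and>
     (\<forall>v\<in>X \<union> Y. \<exists>vs es. path_rep ends F (comp ends F v) vs es \<and>
        length es \<in> {2, 4, 6, 8} \<and> hd vs \<in> X \<and> last vs \<in> X)"

definition GP_verts :: "'v set \<Rightarrow> ('e \<Rightarrow> 'v \<times> 'v) \<Rightarrow> 'e set \<Rightarrow> 'v set" where
  "GP_verts X ends F = {x \<in> X. deg ends F x = 2}"

text \<open>Adjacency of G_P; Q = G - E(P) has edge set E - F.\<close>
definition GP_adj :: "'v set \<Rightarrow> 'e set \<Rightarrow> ('e \<Rightarrow> 'v \<times> 'v) \<Rightarrow> 'e set \<Rightarrow> 'v \<Rightarrow> 'v \<Rightarrow> bool" where
  "GP_adj X E ends F xi xj \<longleftrightarrow>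
     xi \<in> GP_verts X ends F \<and> xj \<in> GP_verts X ends F \<and> xi \<noteq> xj \<and>
     ( (comp ends F xi = comp ends F xj \<and>
          (\<exists>vs es. path_rep ends F (comp ends F xi) vs es \<and> length es = 6))
     \<or> (\<exists>vs es i j. path_rep ends F (comp ends F xi) vs es \<and> length es = 8 \<and>
          i < length vs \<and> j < length vs \<and> vs ! i = xi \<and> vs ! j = xj \<and>
          (i = j + 4 \<or> j = i + 4))
     \<or> (comp ends (E - F) xi = comp ends (E - F) xj \<and>
          deg ends (E - F) xi = 1 \<and> deg ends (E - F) xj = 1))"

definition bipartite_on :: "'v set \<Rightarrow> ('v \<Rightarrow> 'v \<Rightarrow> bool) \<Rightarrow> bool" where
  "bipartite_on V R \<longleftrightarrow> (\<exists>A \<subseteq> V. \<forall>u\<in>V. \<forall>v\<in>V. R u v \<longrightarrow> (u \<in> A \<longleftrightarrow> v \<notin> A))"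

end

(* G_P is the union of two matchings on the X-vertices of P-degree 2.  Such a vertex is an even
   interior vertex of its P-path: a 6-path has two of them, paired by (a), and an 8-path three,
   of which (b) pairs the outer two.  Clause (c) pairs the two ends of a path of Q, and Q has
   maximum degree 2 (degree 3 - d_P \<le> 2 on X, 4 - 2 on Y), so a component of Q has at most two
   leaves.  A union of two matchings is bipartite: contract an edge ab of the second matching,
   joining the partners of a and b in the first, and colour a and b back in by induction. *)

theory Submission
  imports Defs
begin

section \<open>Unions of two matchings\<close>

definition matching_on :: "'v set \<Rightarrow> ('v \<Rightarrow> 'v \<Rightarrow> bool) \<Rightarrow> bool" where
  "matching_on V R \<longleftrightarrow> (\<forall>u\<in>V. \<forall>v\<in>V. R u v \<longrightarrow> R v u \<and> u \<noteq> v) \<and>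
     (\<forall>u\<in>V. \<forall>v\<in>V. \<forall>w\<in>V. R u v \<longrightarrow> R u w \<longrightarrow> v = w)"

lemma matching_onD:
  assumes "matching_on V R" "u \<in> V" "v \<in> V" "R u v"
  shows "R v u" and "u \<noteq> v" and "w \<in> V \<Longrightarrow> R u w \<Longrightarrow> w = v"
  using assms unfolding matching_on_def by blast+

lemma matching_on_subset: "matching_on V R \<Longrightarrow> W \<subseteq> V \<Longrightarrow> matching_on W R"
  unfolding matching_on_def by blast

definition bypass :: "('v \<Rightarrow> 'v \<Rightarrow> bool) \<Rightarrow> 'v \<Rightarrow> 'v \<Rightarrow> 'v \<Rightarrow> 'v \<Rightarrow> bool" where
  "bypass R a b u v \<longleftrightarrow> R u v \<or> (R u a \<and> R v b) \<or> (R u b \<and> R v a)"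

lemma matching_on_bypass:
  assumes "matching_on V R" "a \<in> V" "b \<in> V" "a \<noteq> b"
  shows "matching_on (V - {a, b}) (bypass R a b)"
  using assms unfolding matching_on_def bypass_def by (smt (verit) DiffE insertCI)

lemma bipartite_on_iff_colouring:
  fixes V :: "'a set" and R :: "'a \<Rightarrow> 'a \<Rightarrow> bool"
  shows "bipartite_on V R \<longleftrightarrow> (\<exists>c :: 'a \<Rightarrow> bool. \<forall>u\<in>V. \<forall>v\<in>V. R u v \<longrightarrow> c u \<noteq> c v)"
proof
  assume "bipartite_on V R"
  then obtain A where "\<forall>u\<in>V. \<forall>v\<in>V. R u v \<longrightarrow> (u \<in> A \<longleftrightarrow> v \<notin> A)"
    unfolding bipartite_on_def by blast
  then show "\<exists>c :: 'a \<Rightarrow> bool. \<forall>u\<in>V. \<forall>v\<in>V. R u v \<longrightarrow> c u \<noteq> c v"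
    by (intro exI[of _ "\<lambda>u. u \<in> A"]) blast
next
  assume "\<exists>c :: 'a \<Rightarrow> bool. \<forall>u\<in>V. \<forall>v\<in>V. R u v \<longrightarrow> c u \<noteq> c v"
  then obtain c :: "'a \<Rightarrow> bool" where "\<forall>u\<in>V. \<forall>v\<in>V. R u v \<longrightarrow> c u \<noteq> c v" by blast
  then show "bipartite_on V R" unfolding bipartite_on_def
    by (intro exI[of _ "{u \<in> V. c u}"]) auto
qed

lemma bipartite_on_mono:
  assumes "bipartite_on V R" and "\<And>u v. u \<in> V \<Longrightarrow> v \<in> V \<Longrightarrow> S u v \<Longrightarrow> R u v"
  shows "bipartite_on V S"
proof -
  obtain c :: "'a \<Rightarrow> bool" where "\<forall>u\<in>V. \<forall>v\<in>V. R u v \<longrightarrow> c u \<noteq> c v"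
    using assms(1) unfolding bipartite_on_iff_colouring by blast
  then have "\<forall>u\<in>V. \<forall>v\<in>V. S u v \<longrightarrow> c u \<noteq> c v" using assms(2) by blast
  then show ?thesis unfolding bipartite_on_iff_colouring by blast
qed

lemma bypass_end_colour:
  fixes c :: "'a \<Rightarrow> bool"
  assumes m: "matching_on V R" and ab: "a \<in> V" "b \<in> V"
    and c: "\<forall>u\<in>V - {a, b}. \<forall>v\<in>V - {a, b}. bypass R a b u v \<longrightarrow> c u \<noteq> c v"
  shows "\<exists>p. (\<forall>v\<in>V - {a, b}. R a v \<longrightarrow> c v \<noteq> p) \<and> (\<forall>v\<in>V - {a, b}. R b v \<longrightarrow> c v = p)"
proof -
  let ?W = "V - {a, b}"
  have partner_unique: "v = w" if "x \<in> V" "v \<in> ?W" "w \<in> ?W" "R x v" "R x w" for x v w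
    using matching_onD(3)[OF m] that by blast
  show ?thesis
  proof (cases "\<exists>a'\<in>?W. R a a'")
    case True
    then obtain a' where a': "a' \<in> ?W" "R a a'" by blast
    have "c v = (\<not> c a')" if v: "v \<in> ?W" "R b v" for v
    proof -
      have "R a' a" "R v b" using matching_onD(1)[OF m] a' v ab by blast+
      then have "bypass R a b a' v" unfolding bypass_def by blast
      then show ?thesis using c a' v by blast
    qed
    moreover have "v = a'" if "v \<in> ?W" "R a v" for v
      using partner_unique[OF ab(1) that(1) a'(1) that(2) a'(2)] .
    ultimately show ?thesis by (intro exI[of _ "\<not> c a'"]) auto
  next
    case no_a': False
    show ?thesis
    proof (cases "\<exists>b'\<in>?W. R b b'")
      case True
      then obtain b' where b': "b' \<in> ?W" "R b b'" by blast
      have "v = b'" if "v \<in> ?W" "R b v" for v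
        using partner_unique[OF ab(2) that(1) b'(1) that(2) b'(2)] .
      then show ?thesis using no_a' by (intro exI[of _ "c b'"]) auto
    qed (use no_a' in blast)
  qed
qed

lemma bipartite_on_union_bypass:
  assumes m1: "matching_on V R1" and m2: "matching_on V R2"
    and ab: "a \<in> V" "b \<in> V" "R2 a b"
    and bip: "bipartite_on (V - {a, b}) (\<lambda>u v. bypass R1 a b u v \<or> R2 u v)"
  shows "bipartite_on V (\<lambda>u v. R1 u v \<or> R2 u v)"
proof -
  let ?W = "V - {a, b}"
  have sym: "R1 v u \<or> R2 v u" "u \<noteq> v" if "u \<in> V" "v \<in> V" "R1 u v \<or> R2 u v" for u v
    using matching_onD(1,2)[OF m1] matching_onD(1,2)[OF m2] that by blast+
  have no_R2: "\<not> R2 u v" if "u = a \<or> u = b" "v \<in> ?W" for u v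
    using matching_onD(3)[OF m2 ab] matching_onD(3)[OF m2 ab(2,1) matching_onD(1)[OF m2 ab]] that
    by blast
  obtain c' :: "'a \<Rightarrow> bool"
    where c': "\<forall>u\<in>?W. \<forall>v\<in>?W. bypass R1 a b u v \<or> R2 u v \<longrightarrow> c' u \<noteq> c' v"
    using bip unfolding bipartite_on_iff_colouring by blast
  then have "\<forall>u\<in>?W. \<forall>v\<in>?W. bypass R1 a b u v \<longrightarrow> c' u \<noteq> c' v" by blast
  then obtain p where p_a: "\<forall>v\<in>?W. R1 a v \<longrightarrow> c' v \<noteq> p"
    and p_b: "\<forall>v\<in>?W. R1 b v \<longrightarrow> c' v = p"
    using bypass_end_colour[OF m1 ab(1,2)] by blast
  define c where "c = c'(a := p, b := \<not> p)"
  have "a \<noteq> b" using sym(2)[of a b] ab by blast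
  then have c_ab: "c a = p" "c b = (\<not> p)" and c_W: "\<And>u. u \<in> ?W \<Longrightarrow> c u = c' u"
    unfolding c_def by auto
  have at_ends: "c u \<noteq> c v" if u: "u = a \<or> u = b" and v: "v \<in> V" "R1 u v \<or> R2 u v" for u v
  proof (cases "v \<in> ?W")
    case True
    then have "R1 u v" using v(2) no_R2[OF u] by blast
    then show ?thesis using u p_a p_b c_ab c_W[OF True] True by auto
  next
    case False
    then have "v = a \<or> v = b" using v(1) by blast
    moreover have "u \<noteq> v" using sym(2) u v ab by blast
    ultimately show ?thesis using u c_ab by auto
  qed
  have "\<forall>u\<in>V. \<forall>v\<in>V. R1 u v \<or> R2 u v \<longrightarrow> c u \<noteq> c v"
  proof (intro ballI impI)
    fix u v assume uv: "u \<in> V" "v \<in> V" "R1 u v \<or> R2 u v"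
    consider "u \<in> ?W" "v \<in> ?W" | "u = a \<or> u = b" | "v = a \<or> v = b" using uv(1,2) by blast
    then show "c u \<noteq> c v"
    proof cases
      case 1
      then show ?thesis using c' uv(3) c_W unfolding bypass_def by auto
    next
      case 2
      then show ?thesis using at_ends uv(2,3) by blast
    next
      case 3
      then have "c v \<noteq> c u" using at_ends uv(1) sym(1)[OF uv] by blast
      then show ?thesis by simp
    qed
  qed
  then show ?thesis unfolding bipartite_on_iff_colouring by blast
qed

theorem bipartite_on_union_of_matchings:
  assumes "finite V" and "matching_on V R1" and "matching_on V R2"
  shows "bipartite_on V (\<lambda>u v. R1 u v \<or> R2 u v)"
  using assms
proof (induction "card V" arbitrary: V R1 R2 rule: less_induct)
  case less
  show ?case
  proof (cases "\<exists>a\<in>V. \<exists>b\<in>V. R1 a b \<or> R2 a b")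
    case False
    then show ?thesis unfolding bipartite_on_def by blast
  next
    case True
    then obtain a b where ab: "a \<in> V" "b \<in> V" "R1 a b \<or> R2 a b" by blast
    have "a \<noteq> b" using ab matching_onD(2)[OF less.prems(2)] matching_onD(2)[OF less.prems(3)] by blast
    have smaller: "card (V - {a, b}) < card V"
      using less.prems(1) ab by (metis Diff_insert2 card_Diff2_less)
    have bypass_bip: "bipartite_on (V - {a, b}) (\<lambda>u v. bypass S a b u v \<or> T u v)"
      if "matching_on V S" "matching_on V T" for S T
      by (rule less.hyps[OF smaller finite_Diff[OF less.prems(1)]
            matching_on_bypass[OF that(1) ab(1,2) \<open>a \<noteq> b\<close>] matching_on_subset[OF that(2) Diff_subset]])
    show ?thesis
    proof (cases "R2 a b")
      case True
      show ?thesis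
        by (rule bipartite_on_union_bypass[OF less.prems(2,3) ab(1,2) True bypass_bip[OF less.prems(2,3)]])
    next
      case False
      then have "R1 a b" using ab by blast
      then have "bipartite_on V (\<lambda>u v. R2 u v \<or> R1 u v)"
        by (rule bipartite_on_union_bypass[OF less.prems(3,2) ab(1,2) _ bypass_bip[OF less.prems(3,2)]])
      then show ?thesis by (simp add: disj_commute)
    qed
  qed
qed

section \<open>Components of maximum degree two\<close>

lemma joins_commute: "joins ends e u v \<longleftrightarrow> joins ends e v u"
  unfolding joins_def by auto

lemma adj_commute: "adj ends F u v \<longleftrightarrow> adj ends F v u"
  unfolding adj_def using joins_commute by metis

lemma inc_iff_joins: "inc ends e v \<longleftrightarrow> (\<exists>t. joins ends e v t)"
  unfolding inc_def joins_def by (cases "ends e") auto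

lemma in_comp_self: "v \<in> comp ends F v"
  unfolding comp_def by simp

lemma comp_eq:
  assumes "u \<in> comp ends F v"
  shows "comp ends F u = comp ends F v"
proof -
  have "(adj ends F)\<^sup>*\<^sup>* v u" using assms unfolding comp_def by simp
  moreover have "(adj ends F)\<^sup>*\<^sup>* u v"
    using rtranclp_converseI[OF calculation] adj_commute[of ends F]
    by (simp add: conversep_iff[abs_def])
  ultimately show ?thesis unfolding comp_def by (auto intro: rtranclp_trans)
qed

lemma finite_deg_pos:
  assumes "finite F"
  shows "finite {u. 0 < deg ends F u}"
proof (rule finite_subset)
  show "{u. 0 < deg ends F u} \<subseteq> fst ` ends ` F \<union> snd ` ends ` F"
    unfolding deg_def inc_def by (force simp: card_gt_0_iff)
qed (use assms in simp)

lemma deg_Diff_edge: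
  assumes "finite F" "e0 \<in> F"
  shows "deg ends (F - {e0}) u = deg ends F u - (if inc ends e0 u then 1 else 0)"
proof -
  have "{e \<in> F - {e0}. inc ends e u} = {e \<in> F. inc ends e u} - {e0}" by auto
  then show ?thesis unfolding deg_def using assms by (simp add: card_Diff_singleton_if)
qed

lemma comp_isolated:
  assumes "finite F" "deg ends F w = 0"
  shows "comp ends F w = {w}"
proof -
  have no_edge: "\<not> adj ends F w t" for t
    using assms inc_iff_joins unfolding deg_def adj_def by fastforce
  have "(adj ends F)\<^sup>*\<^sup>* w u \<Longrightarrow> u = w" for u
    by (induction rule: rtranclp_induct) (use no_edge in auto)
  then show ?thesis unfolding comp_def by auto
qed

lemma comp_subset_remove_leaf_edge:
  assumes leaf: "{e \<in> F. inc ends e x} = {e0}" and e0: "joins ends e0 x w"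
  shows "comp ends F x \<subseteq> insert x (comp ends (F - {e0}) w)"
proof
  fix u assume "u \<in> comp ends F x"
  then have "(adj ends F)\<^sup>*\<^sup>* x u" unfolding comp_def by simp
  then show "u \<in> insert x (comp ends (F - {e0}) w)"
  proof (induction rule: rtranclp_induct)
    case base
    then show ?case by simp
  next
    case (step b c)
    obtain e where e: "e \<in> F" "joins ends e b c" using step.hyps(2) unfolding adj_def by blast
    have ends_e0: "joins ends e0 s t \<Longrightarrow> (s = x \<and> t = w) \<or> (s = w \<and> t = x)" for s t
      using e0 unfolding joins_def by auto
    show ?case
    proof (cases "b = x")
      case True
      then have "e \<in> {e \<in> F. inc ends e x}" using e inc_iff_joins[of ends e x] by blast
      then have "e = e0" using leaf by blast
      then have "c = x \<or> c = w" using ends_e0[of b c] e(2) True by auto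
      then show ?thesis unfolding comp_def by auto
    next
      case False
      show ?thesis
      proof (cases "c = x")
        case False
        then have "e \<noteq> e0" using ends_e0[of b c] e(2) \<open>b \<noteq> x\<close> by auto
        then have "adj ends (F - {e0}) b c" unfolding adj_def using e by blast
        moreover have "(adj ends (F - {e0}))\<^sup>*\<^sup>* w b" using step.IH \<open>b \<noteq> x\<close> unfolding comp_def by simp
        ultimately show ?thesis unfolding comp_def by (simp add: rtranclp.rtrancl_into_rtrancl)
      qed simp
    qed
  qed
qed

lemma inc_iff_ends: "joins ends e x w \<Longrightarrow> inc ends e u \<longleftrightarrow> u = x \<or> u = w"
  unfolding joins_def inc_def by auto

lemma card_comp_leaves_remove_leaf_edge:
  assumes fin: "finite F" and leaf: "{e \<in> F. inc ends e x} = {e0}" and e0: "joins ends e0 x w"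
    and x: "x \<in> comp ends F v" and w: "deg ends F w = 2"
  shows "card {u \<in> comp ends F v. deg ends F u = 1}
    \<le> card {u \<in> comp ends (F - {e0}) w. deg ends (F - {e0}) u = 1}"
    (is "card ?L \<le> card ?L'")
proof -
  have "e0 \<in> F" using leaf by auto
  have deg_F': "deg ends (F - {e0}) u = deg ends F u - (if u = x \<or> u = w then 1 else 0)" for u
    by (simp add: deg_Diff_edge[OF fin \<open>e0 \<in> F\<close>] inc_iff_ends[OF e0])
  have comp_x: "comp ends F v \<subseteq> insert x (comp ends (F - {e0}) w)"
    using comp_eq[OF x] comp_subset_remove_leaf_edge[OF leaf e0] by simp
  have "w \<in> ?L'" using w deg_F'[of w] in_comp_self[of w ends "F - {e0}"] by simp
  have "finite ?L'" using finite_deg_pos[of "F - {e0}" ends] fin by (auto elim: finite_subset[rotated])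
  have "?L \<subseteq> insert x (?L' - {w})"
  proof
    fix u assume u: "u \<in> ?L"
    show "u \<in> insert x (?L' - {w})"
    proof (cases "u = x")
      case False
      have "u \<noteq> w" using u w by auto
      then show ?thesis using u False deg_F'[of u] comp_x by auto
    qed simp
  qed
  then have "card ?L \<le> card (insert x (?L' - {w}))"
    using \<open>finite ?L'\<close> by (intro card_mono) auto
  also have "\<dots> \<le> Suc (card (?L' - {w}))" using \<open>finite ?L'\<close> by (simp add: card_insert_if)
  also have "\<dots> = card ?L'" using \<open>finite ?L'\<close> \<open>w \<in> ?L'\<close> by (rule card_Suc_Diff1)
  finally show ?thesis .
qed

lemma card_comp_leaves_le_2:
  assumes "finite F" "\<forall>u. deg ends F u \<le> 2"
  shows "card {u \<in> comp ends F v. deg ends F u = 1} \<le> 2"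
  using assms
proof (induction "card F" arbitrary: F v rule: less_induct)
  case less
  let ?L = "{u \<in> comp ends F v. deg ends F u = 1}"
  show ?case
  proof (cases "?L = {}")
    case False
    then obtain x where x: "x \<in> comp ends F v" "deg ends F x = 1" by blast
    obtain e0 where leaf: "{e \<in> F. inc ends e x} = {e0}"
      using x(2) card_1_singletonE[of "{e \<in> F. inc ends e x}"] unfolding deg_def by auto
    then have "e0 \<in> F" "inc ends e0 x" by auto
    then obtain w where e0: "joins ends e0 x w" using inc_iff_joins[of ends e0 x] by blast
    have deg_F': "deg ends (F - {e0}) u = deg ends F u - (if u = x \<or> u = w then 1 else 0)" for u
      by (simp add: deg_Diff_edge[OF less.prems(1) \<open>e0 \<in> F\<close>] inc_iff_ends[OF e0])
    have "e0 \<in> {e \<in> F. inc ends e w}" using \<open>e0 \<in> F\<close> inc_iff_ends[OF e0] by simp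
    then have "deg ends F w \<noteq> 0" unfolding deg_def using less.prems(1) by (auto simp: card_eq_0_iff)
    then consider "deg ends F w = 1" | "deg ends F w = 2"
      using less.prems(2) by (metis One_nat_def Suc_1 le_SucE le_zero_eq)
    then show ?thesis
    proof cases
      case 1
      then have "comp ends (F - {e0}) w = {w}"
        using less.prems(1) by (intro comp_isolated) (simp_all add: deg_F')
      then have "?L \<subseteq> {x, w}" using comp_eq[OF x(1)] comp_subset_remove_leaf_edge[OF leaf e0] by auto
      then have "card ?L \<le> card {x, w}" by (simp add: card_mono)
      also have "\<dots> \<le> 2" by (simp add: card_insert_le_m1)
      finally show ?thesis .
    next
      case 2
      have "card {u \<in> comp ends (F - {e0}) w. deg ends (F - {e0}) u = 1} \<le> 2"
      proof (rule less.hyps)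
        show "card (F - {e0}) < card F" using less.prems(1) \<open>e0 \<in> F\<close> by (rule card_Diff1_less)
        show "\<forall>u. deg ends (F - {e0}) u \<le> 2" using less.prems(2) deg_F' by (metis diff_le_self order_trans)
      qed (use less.prems(1) in simp)
      then show ?thesis
        using card_comp_leaves_remove_leaf_edge[OF less.prems(1) leaf e0 x(1) 2] by linarith
    qed
  qed (metis card.empty zero_le)
qed

definition leaf_mates :: "('e \<Rightarrow> 'v \<times> 'v) \<Rightarrow> 'e set \<Rightarrow> 'v \<Rightarrow> 'v \<Rightarrow> bool" where
  "leaf_mates ends Q u v \<longleftrightarrow> u \<noteq> v \<and> comp ends Q u = comp ends Q v \<and>
     deg ends Q u = 1 \<and> deg ends Q v = 1"

lemma matching_on_leaf_mates:
  assumes "finite Q" "\<forall>u. deg ends Q u \<le> 2"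
  shows "matching_on V (leaf_mates ends Q)"
proof -
  have "v = w" if "leaf_mates ends Q u v" "leaf_mates ends Q u w" for u v w
  proof (rule ccontr)
    assume "v \<noteq> w"
    define L where "L = {t \<in> comp ends Q u. deg ends Q t = 1}"
    have "finite L" unfolding L_def by (rule finite_subset[OF _ finite_deg_pos[OF assms(1), of ends]]) auto
    have "{u, v, w} \<subseteq> L"
      using that in_comp_self[of v ends Q] in_comp_self[of w ends Q] in_comp_self[of u ends Q]
      unfolding L_def leaf_mates_def by auto
    then have "card {u, v, w} \<le> card L" using \<open>finite L\<close> by (rule card_mono[rotated])
    moreover have "card {u, v, w} = 3" using that \<open>v \<noteq> w\<close> unfolding leaf_mates_def by auto
    moreover have "card L \<le> 2" unfolding L_def by (rule card_comp_leaves_le_2[OF assms])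
    ultimately show False by linarith
  qed
  moreover have "leaf_mates ends Q v u \<and> u \<noteq> v" if "leaf_mates ends Q u v" for u v
    using that unfolding leaf_mates_def by auto
  ultimately show ?thesis unfolding matching_on_def by blast
qed

section \<open>Path representations\<close>

lemma path_rep_edge_at:
  assumes P: "path_rep ends F C vs es" and "e \<in> F" "p < length vs" "joins ends e (vs!p) t"
  shows "\<exists>k<length es. e = es!k \<and> ((k = p \<and> t = vs!Suc p) \<or> (Suc k = p \<and> t = vs!k))"
proof -
  have "vs!p \<in> C" "inc ends e (vs!p)"
    using P assms(3,4) inc_iff_joins[of ends e "vs!p"] unfolding path_rep_def by auto
  then have "e \<in> set es" using P \<open>e \<in> F\<close> unfolding path_rep_def by blast
  then obtain k where k: "k < length es" "e = es!k" by (auto simp: in_set_conv_nth)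
  have "joins ends e (vs!k) (vs!Suc k)" "distinct vs" "length vs = Suc (length es)"
    using P k unfolding path_rep_def by auto
  moreover have "(vs!p = vs!k \<and> t = vs!Suc k) \<or> (vs!p = vs!Suc k \<and> t = vs!k)"
    using calculation(1) assms(4) unfolding joins_def by auto
  ultimately have "(p = k \<and> t = vs!Suc k) \<or> (p = Suc k \<and> t = vs!k)"
    using assms(3) k(1) by (simp add: nth_eq_iff_index_eq)
  then show ?thesis using k by auto
qed

lemma adj_path_rep_iff:
  assumes P: "path_rep ends F C vs es" and i: "i < length vs"
  shows "adj ends F (vs!i) t \<longleftrightarrow> (\<exists>j<length vs. t = vs!j \<and> (j = Suc i \<or> i = Suc j))"
proof -
  have l: "length vs = Suc (length es)" and es_F: "\<And>k. k < length es \<Longrightarrow> es!k \<in> F"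
    and es_joins: "\<And>k. k < length es \<Longrightarrow> joins ends (es!k) (vs!k) (vs!Suc k)"
    using P unfolding path_rep_def by auto
  show ?thesis
  proof
    assume "adj ends F (vs!i) t"
    then obtain e where "e \<in> F" "joins ends e (vs!i) t" unfolding adj_def by blast
    then obtain k where k: "k < length es" "(k = i \<and> t = vs!Suc i) \<or> (Suc k = i \<and> t = vs!k)"
      using path_rep_edge_at[OF P _ i] by blast
    then show "\<exists>j<length vs. t = vs!j \<and> (j = Suc i \<or> i = Suc j)"
      using l by (metis Suc_mono less_SucI)
  next
    assume "\<exists>j<length vs. t = vs!j \<and> (j = Suc i \<or> i = Suc j)"
    then obtain j where j: "j < length vs" "t = vs!j" "j = Suc i \<or> i = Suc j" by blast
    then show "adj ends F (vs!i) t"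
      using i l es_F es_joins joins_commute unfolding adj_def by (metis Suc_less_SucD)
  qed
qed

lemma deg_path_rep:
  assumes P: "path_rep ends F C vs es" and "0 < length es" "p \<le> length es"
  shows "deg ends F (vs!p) = (if p = 0 \<or> p = length es then 1 else 2)"
proof -
  let ?K = "{k. k < length es \<and> (k = p \<or> Suc k = p)}"
  have "{e \<in> F. inc ends e (vs!p)} = (\<lambda>k. es!k) ` ?K"
  proof
    show "{e \<in> F. inc ends e (vs!p)} \<subseteq> (\<lambda>k. es!k) ` ?K"
    proof
      fix e assume "e \<in> {e \<in> F. inc ends e (vs!p)}"
      then obtain t where "e \<in> F" "joins ends e (vs!p) t" using inc_iff_joins[of ends e] by blast
      moreover have "p < length vs" using P assms(3) unfolding path_rep_def by simp
      ultimately obtain k where "k < length es" "e = es!k" "k = p \<or> Suc k = p"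
        using path_rep_edge_at[OF P] by blast
      then show "e \<in> (\<lambda>k. es!k) ` ?K" by blast
    qed
    show "(\<lambda>k. es!k) ` ?K \<subseteq> {e \<in> F. inc ends e (vs!p)}"
    proof
      fix e assume "e \<in> (\<lambda>k. es!k) ` ?K"
      then obtain k where k: "k < length es" "k = p \<or> Suc k = p" "e = es!k" by blast
      then have "e \<in> F" "joins ends e (vs!k) (vs!Suc k)" using P unfolding path_rep_def by auto
      then show "e \<in> {e \<in> F. inc ends e (vs!p)}" using k(2) unfolding inc_def joins_def by auto
    qed
  qed
  moreover have "inj_on (\<lambda>k. es!k) ?K" using P unfolding path_rep_def by (auto intro: inj_on_nth)
  ultimately have "deg ends F (vs!p) = card ?K" unfolding deg_def by (simp add: card_image)
  moreover have "card ?K = (if p = 0 \<or> p = length es then 1 else 2)"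
  proof -
    consider "p = 0" | "p = length es" | "0 < p" "p < length es" using assms(3) by linarith
    then show ?thesis
    proof cases
      case 1
      then have "?K = {0}" using assms(2) by auto
      then show ?thesis using 1 by simp
    next
      case 2
      then have "?K = {p - 1}" using assms(2) by auto
      then show ?thesis using 2 by simp
    next
      case 3
      then have "?K = {p - 1, p}" by auto
      then show ?thesis using 3 by simp
    qed
  qed
  ultimately show ?thesis by simp
qed

lemma card_path_rep: "path_rep ends F C vs es \<Longrightarrow> card C = Suc (length es)"
  unfolding path_rep_def by (metis distinct_card)

lemma path_rep_neighbours_8:
  assumes P: "path_rep ends F C vs es" and "length es = 8"
  shows "\<exists>t. adj ends F (vs!2) t \<and> adj ends F (vs!4) t"
    and "\<exists>t. adj ends F (vs!6) t \<and> adj ends F (vs!4) t"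
    and "\<not> (\<exists>t. adj ends F (vs!2) t \<and> adj ends F (vs!6) t)"
proof -
  have l: "length vs = 9" using P assms(2) unfolding path_rep_def by simp
  note adj = adj_path_rep_iff[OF P]
  show "\<exists>t. adj ends F (vs!2) t \<and> adj ends F (vs!4) t"
    using l by (intro exI[of _ "vs!3"]) (auto simp: adj intro!: exI[of _ 3])
  show "\<exists>t. adj ends F (vs!6) t \<and> adj ends F (vs!4) t"
    using l by (intro exI[of _ "vs!5"]) (auto simp: adj intro!: exI[of _ 5])
  show "\<not> (\<exists>t. adj ends F (vs!2) t \<and> adj ends F (vs!6) t)"
  proof
    assume "\<exists>t. adj ends F (vs!2) t \<and> adj ends F (vs!6) t"
    then obtain j k where "j < 9" "k < 9" "vs!j = vs!k" "j = 1 \<or> j = 3" "k = 5 \<or> k = 7"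
      using l by (auto simp: adj)
    moreover have "distinct vs" using P unfolding path_rep_def by simp
    ultimately show False using l by (auto simp: nth_eq_iff_index_eq)
  qed
qed

section \<open>The graph G_P\<close>

definition path_mates :: "('e \<Rightarrow> 'v \<times> 'v) \<Rightarrow> 'e set \<Rightarrow> 'v \<Rightarrow> 'v \<Rightarrow> bool" where
  "path_mates ends F u v \<longleftrightarrow> u \<noteq> v \<and>
     ((comp ends F u = comp ends F v \<and>
         (\<exists>vs es. path_rep ends F (comp ends F u) vs es \<and> length es = 6)) \<or>
      (\<exists>vs es i j. path_rep ends F (comp ends F u) vs es \<and> length es = 8 \<and>
         i < length vs \<and> j < length vs \<and> vs ! i = u \<and> vs ! j = v \<and> (i = j + 4 \<or> j = i + 4)))"

lemma GP_adj_iff: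
  "GP_adj X E ends F u v \<longleftrightarrow> u \<in> GP_verts X ends F \<and> v \<in> GP_verts X ends F \<and>
     (path_mates ends F u v \<or> leaf_mates ends (E - F) u v)"
  unfolding GP_adj_def path_mates_def leaf_mates_def by blast

lemma path_mates_comp:
  assumes "path_mates ends F u v"
  shows "comp ends F v = comp ends F u"
proof -
  consider "comp ends F u = comp ends F v"
    | vs es j where "path_rep ends F (comp ends F u) vs es" "j < length vs" "vs ! j = v"
    using assms unfolding path_mates_def by blast
  then show ?thesis
  proof cases
    case 2
    then have "v \<in> comp ends F u" unfolding path_rep_def by (metis nth_mem)
    then show ?thesis by (rule comp_eq)
  qed simp
qed

lemma path_mates_commute:
  assumes "path_mates ends F u v"
  shows "path_mates ends F v u"
proof -
  have c: "comp ends F v = comp ends F u" by (rule path_mates_comp[OF assms])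
  show ?thesis using assms unfolding path_mates_def c by blast
qed

context
  fixes X Y :: "'v set" and E F :: "'e set" and ends :: "'e \<Rightarrow> 'v \<times> 'v"
  assumes biregular: "biregular34 X Y E ends" and factor: "proper_path_factor X Y E ends F"
begin

lemma finite_E: "finite E" and disjoint_X_Y: "X \<inter> Y = {}"
  and edge_ends: "e \<in> E \<Longrightarrow> fst (ends e) \<in> X \<and> snd (ends e) \<in> Y"
  and deg_E_X: "x \<in> X \<Longrightarrow> deg ends E x = 3" and deg_E_Y: "y \<in> Y \<Longrightarrow> deg ends E y = 4"
  using biregular unfolding biregular34_def by auto

lemma F_subset_E: "F \<subseteq> E"
  using factor unfolding proper_path_factor_def by simp

lemma joins_X_iff:
  assumes "e \<in> E" "joins ends e a b"
  shows "a \<in> X \<longleftrightarrow> b \<notin> X"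
  using assms(2) edge_ends[OF assms(1)] disjoint_X_Y unfolding joins_def by auto

lemma deg_F_cases:
  assumes "v \<in> X \<union> Y"
  shows "deg ends F v = 2 \<or> (deg ends F v = 1 \<and> v \<in> X)"
proof -
  obtain vs es where P: "path_rep ends F (comp ends F v) vs es" and "length es \<in> {2, 4, 6, 8}"
    and ends_X: "hd vs \<in> X" "last vs \<in> X"
    using factor assms unfolding proper_path_factor_def by blast
  then have "0 < length es" by auto
  have l: "length vs = Suc (length es)" using P unfolding path_rep_def by simp
  obtain p where p: "p \<le> length es" "v = vs!p"
    using P in_comp_self[of v ends F] unfolding path_rep_def by (metis in_set_conv_nth less_Suc_eq_le)
  have "vs \<noteq> []" using l by auto
  then have "hd vs = vs!0" "last vs = vs!length es" by (simp_all add: hd_conv_nth last_conv_nth l)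
  then show ?thesis
    using deg_path_rep[OF P \<open>0 < length es\<close> p(1)] p ends_X by auto
qed

lemma deg_Q_le_2: "deg ends (E - F) v \<le> 2"
proof -
  have "{e \<in> E - F. inc ends e v} = {e \<in> E. inc ends e v} - {e \<in> F. inc ends e v}" by auto
  moreover have "{e \<in> F. inc ends e v} \<subseteq> {e \<in> E. inc ends e v}" using F_subset_E by auto
  ultimately have deg_Q: "deg ends (E - F) v = deg ends E v - deg ends F v"
    unfolding deg_def using finite_E by (simp add: card_Diff_subset finite_subset)
  consider "v \<in> X" | "v \<in> Y" | "v \<notin> X \<union> Y" by blast
  then show ?thesis
  proof cases
    case 1
    then show ?thesis using deg_Q deg_E_X deg_F_cases[of v] by auto
  next
    case 2
    then have "v \<notin> X" using disjoint_X_Y by blast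
    then show ?thesis using 2 deg_Q deg_E_Y deg_F_cases[of v] by auto
  next
    case 3
    then have "{e \<in> E. inc ends e v} = {}" using edge_ends unfolding inc_def by auto
    then have "deg ends E v = 0" unfolding deg_def by (metis card.empty)
    then show ?thesis using deg_Q by simp
  qed
qed

lemma path_rep_X_iff_even:
  assumes P: "path_rep ends F C vs es" and "0 < length es" "i \<le> length es"
  shows "vs!i \<in> X \<longleftrightarrow> even i"
  using assms(3)
proof (induction i)
  case 0
  have "es!0 \<in> E" "joins ends (es!0) (vs!0) (vs!1)"
    using P assms(2) F_subset_E unfolding path_rep_def by auto
  then have "vs!0 \<in> X \<union> Y" using edge_ends[of "es!0"] unfolding joins_def by auto
  moreover have "deg ends F (vs!0) = 1" using deg_path_rep[OF P assms(2)] by simp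
  ultimately show ?case using deg_F_cases by force
next
  case (Suc i)
  have "es!i \<in> E" "joins ends (es!i) (vs!i) (vs!Suc i)"
    using P Suc.prems F_subset_E unfolding path_rep_def by auto
  then show ?case using joins_X_iff Suc by auto
qed

lemma GP_vert_index:
  assumes P: "path_rep ends F C vs es" and "0 < length es" "i \<le> length es"
    and "vs!i \<in> GP_verts X ends F"
  shows "even i \<and> 0 < i \<and> i < length es"
proof -
  have "vs!i \<in> X" "deg ends F (vs!i) = 2" using assms(4) unfolding GP_verts_def by auto
  then show ?thesis
    using path_rep_X_iff_even[OF P assms(2,3)] deg_path_rep[OF P assms(2,3)] assms(3)
    by (auto split: if_splits)
qed

lemma path_rep_8_no_common_neighbour:
  assumes "path_rep ends F C vs es" "length es = 8" "i < length vs" "j < length vs"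
    "vs!i \<in> GP_verts X ends F" "vs!j \<in> GP_verts X ends F" "i = j + 4 \<or> j = i + 4"
  shows "\<not> (\<exists>t. adj ends F (vs!i) t \<and> adj ends F (vs!j) t)"
proof -
  have "length vs = 9" using assms(1,2) unfolding path_rep_def by simp
  then have "even i \<and> 0 < i \<and> i < 8" "even j \<and> 0 < j \<and> j < 8"
    using GP_vert_index[OF assms(1)] assms(2-6) by auto
  then have "(i = 2 \<and> j = 6) \<or> (i = 6 \<and> j = 2)" using assms(7) by presburger
  then show ?thesis using path_rep_neighbours_8(3)[OF assms(1,2)] by blast
qed

(* The middle interior X-vertex of an 8-path shares a P-neighbour with the two others, which
   identifies the pair of (b) independently of the orientation of the path representation. *)
lemma path_mates_positions:
  assumes mates: "path_mates ends F u v" and GP: "u \<in> GP_verts X ends F" "v \<in> GP_verts X ends F"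
    and P: "path_rep ends F (comp ends F u) vs es"
  shows "(length es = 6 \<and> {u, v} = {vs!2, vs!4}) \<or> (length es = 8 \<and> {u, v} = {vs!2, vs!6})"
proof -
  have l: "length vs = Suc (length es)" and set_vs: "set vs = comp ends F u"
    using P unfolding path_rep_def by auto
  have length_unique: "length es' = length es" if "path_rep ends F (comp ends F u) vs' es'" for vs' es'
    using card_path_rep[OF that] card_path_rep[OF P] by simp
  consider (six) "comp ends F u = comp ends F v"
      "\<exists>vs es. path_rep ends F (comp ends F u) vs es \<and> length es = 6"
    | (eight) vs' es' i j where "path_rep ends F (comp ends F u) vs' es'" "length es' = 8"
      "i < length vs'" "j < length vs'" "vs'!i = u" "vs'!j = v" "i = j + 4 \<or> j = i + 4"
    using mates unfolding path_mates_def by blast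
  note mate_cases = this
  have "v \<in> comp ends F u"
    using path_mates_comp[OF mates] in_comp_self[of v ends F] by simp
  moreover have "u \<noteq> v" using mates unfolding path_mates_def by simp
  ultimately obtain p q where pq: "u = vs!p" "v = vs!q" "p \<le> length es" "q \<le> length es" "p \<noteq> q"
    using in_comp_self[of u ends F] set_vs l by (metis in_set_conv_nth less_Suc_eq_le)
  then have "0 < length es" by linarith
  have idx: "even p \<and> 0 < p \<and> p < length es" "even q \<and> 0 < q \<and> q < length es"
    using GP_vert_index[OF P \<open>0 < length es\<close>] pq GP by simp_all
  show ?thesis
  proof (cases rule: mate_cases)
    case six
    then have "length es = 6" using length_unique by metis
    then have "p = 2 \<or> p = 4" "q = 2 \<or> q = 4" using idx by presburger+
    then show ?thesis using pq \<open>length es = 6\<close> by auto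
  next
    case eight
    then have "length es = 8" using length_unique[OF eight(1)] by simp
    have "\<not> (\<exists>t. adj ends F u t \<and> adj ends F v t)"
      using path_rep_8_no_common_neighbour[OF eight(1-4)] eight(5-7) GP by blast
    moreover have "p = 2 \<or> p = 4 \<or> p = 6" "q = 2 \<or> q = 4 \<or> q = 6"
      using idx \<open>length es = 8\<close> by presburger+
    ultimately show ?thesis
      using pq \<open>length es = 8\<close> path_rep_neighbours_8[OF P \<open>length es = 8\<close>] by auto
  qed
qed

lemma matching_on_path_mates: "matching_on (GP_verts X ends F) (path_mates ends F)"
  unfolding matching_on_def
proof (intro conjI ballI impI)
  fix u v w
  assume GP: "u \<in> GP_verts X ends F" "v \<in> GP_verts X ends F" "w \<in> GP_verts X ends F"
    and mates: "path_mates ends F u v" "path_mates ends F u w"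
  obtain vs es where P: "path_rep ends F (comp ends F u) vs es"
    using factor GP(1) unfolding proper_path_factor_def GP_verts_def by blast
  have "{u, v} = {u, w}"
    using path_mates_positions[OF mates(1) GP(1,2) P] path_mates_positions[OF mates(2) GP(1,3) P]
    by (elim disjE conjE) simp_all
  then have "v \<in> {u, w}" by blast
  moreover have "u \<noteq> v" using mates unfolding path_mates_def by simp
  ultimately show "v = w" by blast
next
  fix u v assume mates: "path_mates ends F u v"
  then show "u \<noteq> v" unfolding path_mates_def by simp
  show "path_mates ends F v u" using mates by (rule path_mates_commute)
qed

end

theorem mainTheorem1:
  fixes X Y :: "'v set" and E F :: "'e set" and ends :: "'e \<Rightarrow> 'v \<times> 'v"
  assumes "biregular34 X Y E ends"
    and "proper_path_factor X Y E ends F"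
  shows "bipartite_on (GP_verts X ends F) (GP_adj X E ends F)"
proof (rule bipartite_on_mono)
  have "finite (GP_verts X ends F)"
    using assms(1) unfolding GP_verts_def biregular34_def by simp
  moreover have "matching_on (GP_verts X ends F) (path_mates ends F)"
    by (rule matching_on_path_mates[OF assms])
  moreover have "matching_on (GP_verts X ends F) (leaf_mates ends (E - F))"
    using finite_E[OF assms] deg_Q_le_2[OF assms] by (intro matching_on_leaf_mates) auto
  ultimately show "bipartite_on (GP_verts X ends F)
      (\<lambda>u v. path_mates ends F u v \<or> leaf_mates ends (E - F) u v)"
    by (rule bipartite_on_union_of_matchings)
qed (simp add: GP_adj_iff)

end
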